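(* Let $s>1/2$, $p>0$, let $R_s(x)=\sum_{n=1}^\infty n^{-2s}e^{2\pi i n^2 x}$ on $\mathbb T$, and let $\eta_s(p)=\sup\{\sigma: R_s\in B^{\sigma/p}_{p,\infty}\}$. Then \[ \eta_s(p)=\begin{cases} p(s-1/4), & p\le 4,\\ 1+p(s-1/2), & p>4.\end{cases} \]
   Context: $\mathbb T=\mathbb R/\mathbb Z$, $e_n(x)=e^{2\pi i n x}$. Besov spaces on $\mathbb T$ (for all $p>0$) are defined via Littlewood–Paley blocks: for $f=\sum_n\hat f_ne_n$ and an integer $A\ge2$, let $P_kf=\sum_{A^k\le |n|<A^{k+1}}\hat f_ne_n$ (with the lowest frequencies in the first block); $f\in B^{\sigma}_{p,\infty}$ iff $\sup_{k\in\mathbb N}A^{k\sigma}\|P_kf\|_{L^p(\mathbb T)}<\infty$. *)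

theory Defs
  imports "HOL-Analysis.Analysis"
begin

text \<open>Characters e_n(x) = exp(2 pi i n x) on the torus R/Z (functions on R, 1-periodic).\<close>
definition echar :: "int \<Rightarrow> real \<Rightarrow> complex" where
  "echar n x = exp (2 * of_real pi * \<i> * of_real (real_of_int n * x))"

definition fourier_coeff :: "(real \<Rightarrow> complex) \<Rightarrow> int \<Rightarrow> complex" where
  "fourier_coeff f n = (LINT x:{0..1}|lborel. f x * cnj (echar n x))"

definition LP_block_set :: "nat \<Rightarrow> nat \<Rightarrow> int set" where
  "LP_block_set A k =
     (if k = 0 then {n. \<bar>n\<bar> < int A}
      else {n. int A ^ k \<le> \<bar>n\<bar> \<and> \<bar>n\<bar> < int A ^ (k+1)})"

definition LP_block :: "nat \<Rightarrow> nat \<Rightarrow> (real \<Rightarrow> complex) \<Rightarrow> real \<Rightarrow> complex" where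
  "LP_block A k f x = (\<Sum>n\<in>LP_block_set A k. fourier_coeff f n * echar n x)"

definition Lp_norm_T :: "real \<Rightarrow> (real \<Rightarrow> complex) \<Rightarrow> real" where
  "Lp_norm_T p g = (LINT x:{0..1}|lborel. norm (g x) powr p) powr (1 / p)"

definition besov_inf :: "nat \<Rightarrow> real \<Rightarrow> real \<Rightarrow> (real \<Rightarrow> complex) \<Rightarrow> bool" where
  "besov_inf A \<sigma> p f \<longleftrightarrow>
     bdd_above (range (\<lambda>k. real A powr (real k * \<sigma>) * Lp_norm_T p (LP_block A k f)))"

definition R_fun :: "real \<Rightarrow> real \<Rightarrow> complex" where
  "R_fun s x = (\<Sum>m. of_real (real (Suc m) powr (-2 * s)) * echar (int ((Suc m)^2)) x)"

end

theory Submission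
  imports Defs "HOL-Computational_Algebra.Primes" "HOL-Real_Asymp.Real_Asymp"
begin

(* The k-th Littlewood-Paley block of R_s is the trigonometric polynomial P_k = sum of m^(-2s) e_(m^2)
   over the m with A^k <= m^2 < A^(k+1): about A^(k/2) frequencies, all with weight comparable to
   A^(-ks). With X = A^k:
   - by orthogonality, the square of the L^2 norm of P_k is of order X^(1/2 - 2s);
   - the fourth power of its L^4 norm is at most X^(-4s) times the number of solutions of
     a^2 + b^2 = c^2 + d^2 in the block, which the divisor bound makes O(X^(1+eps));
   - |P_k| <= sqrt A * X^(1/2 - s) everywhere, and |P_k| is of the same order on [0, 1/(6AX)],
     where all phases 2 pi m^2 x lie in [0, pi/3].
   For p <= 4 the L^4 bound controls the L^p norm from above, and the L^2 lower bound (interpolated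
   against the L^4 upper bound when p < 2) from below. For p > 4 the sup bound times the L^4 bound
   gives the upper estimate, and the peak of P_k near 0 the lower one. *)

section \<open>Growth along the powers of A\<close>

lemma bdd_above_scaled_root_if_le:
  fixes J :: "nat \<Rightarrow> real"
  assumes A: "real A \<ge> 1" and p: "p > 0" and K: "K > 0" and e: "\<sigma> + e \<le> 0"
    and J: "\<And>k. k \<ge> 1 \<Longrightarrow> 0 \<le> J k \<and> J k \<le> K * (real A ^ k) powr e"
  shows "bdd_above (range (\<lambda>k. (real A ^ k) powr (\<sigma> / p) * J k powr (1 / p)))"
proof -
  have bound: "(real A ^ k) powr (\<sigma> / p) * J k powr (1 / p) \<le> K powr (1 / p)" if k: "k \<ge> 1" for k
  proof -
    define X where "X = real A ^ k"
    have X: "X \<ge> 1" using A by (simp add: X_def one_le_power)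
    have "J k powr (1 / p) \<le> (K * X powr e) powr (1 / p)"
      using J[OF k] p by (intro powr_mono2) (auto simp: X_def)
    also have "\<dots> = K powr (1 / p) * X powr (e / p)"
      using K X by (simp add: powr_mult powr_powr)
    finally have "X powr (\<sigma> / p) * J k powr (1 / p) \<le> X powr (\<sigma> / p) * (K powr (1 / p) * X powr (e / p))"
      by (intro mult_left_mono) auto
    also have "\<dots> = K powr (1 / p) * X powr ((\<sigma> + e) / p)"
      by (simp add: powr_add add_divide_distrib mult_ac)
    also have "\<dots> \<le> K powr (1 / p)"
      using powr_mono[of "(\<sigma> + e) / p" 0 X] X e p by (simp add: divide_nonpos_pos mult_left_le)
    finally show ?thesis by (simp add: X_def)
  qed
  then have "(real A ^ k) powr (\<sigma> / p) * J k powr (1 / p) \<le> max (K powr (1 / p)) (J 0 powr (1 / p))" for k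
    using bound[of k] by (cases "k = 0") (auto simp: le_max_iff_disj)
  then show ?thesis by (rule bdd_aboveI2)
qed

lemma not_bdd_above_scaled_root_if_ge:
  fixes J :: "nat \<Rightarrow> real"
  assumes A: "real A > 1" and p: "p > 0" and K: "K > 0" and e: "\<sigma> + e > 0"
    and J: "\<And>k. k \<ge> 1 \<Longrightarrow> Y \<le> real A ^ k \<Longrightarrow> K * (real A ^ k) powr e \<le> J k"
  shows "\<not> bdd_above (range (\<lambda>k. (real A ^ k) powr (\<sigma> / p) * J k powr (1 / p)))"
proof
  define d where "d = (\<sigma> + e) / p"
  have d: "d > 0" using e p by (simp add: d_def)
  have "eventually (\<lambda>k. K powr (1 / p) * (real A ^ k) powr d \<le> (real A ^ k) powr (\<sigma> / p) * J k powr (1 / p))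
      sequentially"
  proof -
    have "eventually (\<lambda>k. Y \<le> real A ^ k) sequentially"
      using A by real_asymp
    then have "eventually (\<lambda>k. k \<ge> 1 \<and> Y \<le> real A ^ k) sequentially"
      using eventually_ge_at_top by (rule eventually_conj[rotated])
    then show ?thesis
    proof (rule eventually_mono)
      fix k assume k: "k \<ge> 1 \<and> Y \<le> real A ^ k"
      define X where "X = real A ^ k"
      have X: "X > 0" using A by (simp add: X_def)
      have "K powr (1 / p) * X powr (e / p) = (K * X powr e) powr (1 / p)"
        using K X by (simp add: powr_mult powr_powr)
      also have "\<dots> \<le> J k powr (1 / p)"
        using J k K X p by (intro powr_mono2) (auto simp: X_def)
      finally have "X powr (\<sigma> / p) * (K powr (1 / p) * X powr (e / p)) \<le> X powr (\<sigma> / p) * J k powr (1 / p)"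
        by (intro mult_left_mono) auto
      then show "K powr (1 / p) * (real A ^ k) powr d \<le> (real A ^ k) powr (\<sigma> / p) * J k powr (1 / p)"
        by (simp add: X_def d_def powr_add add_divide_distrib mult_ac)
    qed
  qed
  moreover have "filterlim (\<lambda>k. K powr (1 / p) * (real A ^ k) powr d) at_top sequentially"
    using A K d by real_asymp
  ultimately have "filterlim (\<lambda>k. (real A ^ k) powr (\<sigma> / p) * J k powr (1 / p)) at_top sequentially"
    by (rule filterlim_at_top_mono[rotated])
  moreover assume "bdd_above (range (\<lambda>k. (real A ^ k) powr (\<sigma> / p) * J k powr (1 / p)))"
  then obtain B where "\<And>k. (real A ^ k) powr (\<sigma> / p) * J k powr (1 / p) \<le> B"
    by (auto simp: bdd_above_def)
  ultimately show False
    by (auto simp: filterlim_at_top_dense eventually_sequentially dest!: spec[of _ B] leD)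
qed

section \<open>The divisor bound\<close>

definition divisor_count :: "nat \<Rightarrow> nat" where
  "divisor_count n = card {d. d dvd n}"

lemma divisor_count_mult_le:
  assumes "a > 0" "b > 0"
  shows "divisor_count (a * b) \<le> divisor_count a * divisor_count b"
proof -
  have "{d. d dvd a * b} \<subseteq> (\<lambda>(x, y). x * y) ` ({x. x dvd a} \<times> {y. y dvd b})"
    by (auto elim!: dvd_productE)
  then have "divisor_count (a * b) \<le> card ((\<lambda>(x, y). x * y) ` ({x. x dvd a} \<times> {y. y dvd b}))"
    unfolding divisor_count_def using assms by (intro card_mono finite_imageI) auto
  also have "\<dots> \<le> card ({x. x dvd a} \<times> {y. y dvd b})"
    by (rule card_image_le) (use assms in auto)
  finally show ?thesis by (simp add: divisor_count_def card_cartesian_product)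
qed

lemma divisor_count_prime_power:
  assumes "prime p"
  shows "divisor_count (p ^ a) = a + 1"
proof -
  have "{d. d dvd p ^ a} = (\<lambda>i. p ^ i) ` {..a}"
    using divides_primepow_nat[OF assms] by auto
  moreover have "inj_on (\<lambda>i. p ^ i) {..a}"
    using prime_gt_1_nat[OF assms] by (auto intro: inj_onI simp: power_inject_exp)
  ultimately show ?thesis by (simp add: divisor_count_def card_image)
qed

lemma divisor_count_le_prod_prime_factors:
  fixes g :: "nat \<Rightarrow> real"
  assumes g: "\<And>p a. prime p \<Longrightarrow> real a + 1 \<le> g p * real p powr (real a * \<epsilon>)" and "n > 0"
  shows "real (divisor_count n) \<le> (\<Prod>p\<in>prime_factors n. g p) * real n powr \<epsilon>"
  using \<open>n > 0\<close>
proof (induction n rule: less_induct)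
  case (less n)
  show ?case
  proof (cases "n = 1")
    case True
    then show ?thesis by (simp add: divisor_count_def)
  next
    case False
    then obtain p where p: "prime p" "p dvd n" using prime_factor_nat by blast
    define a where "a = multiplicity p n"
    obtain m where nm: "n = p ^ a * m" and "\<not> p dvd m"
      using multiplicity_decompose'[of n p] less.prems p(1) not_prime_unit unfolding a_def by blast
    have "a > 0" using p less.prems by (simp add: a_def prime_multiplicity_gt_zero_iff)
    have "m > 0" using nm less.prems by (cases "m = 0") auto
    have "m < n"
      using nm \<open>m > 0\<close> one_less_power[OF prime_gt_1_nat[OF p(1)] \<open>a > 0\<close>] by simp
    have factors: "prime_factors n = insert p (prime_factors m)" "p \<notin> prime_factors m"
      using nm p \<open>a > 0\<close> \<open>m > 0\<close> \<open>\<not> p dvd m\<close>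
      by (auto simp: prime_factors_product prime_factorization_prime_power)
    have "divisor_count n \<le> (a + 1) * divisor_count m"
      using divisor_count_mult_le[of "p ^ a" m] \<open>m > 0\<close> p(1)
      by (simp add: nm divisor_count_prime_power prime_gt_0_nat)
    then have "real (divisor_count n) \<le> (real a + 1) * real (divisor_count m)"
      by (metis of_nat_1 of_nat_add of_nat_le_iff of_nat_mult)
    also have "\<dots> \<le> (g p * real p powr (real a * \<epsilon>)) * ((\<Prod>q\<in>prime_factors m. g q) * real m powr \<epsilon>)"
      using g[OF p(1), of a] less.IH[OF \<open>m < n\<close> \<open>m > 0\<close>] by (intro mult_mono) auto
    also have "\<dots> = (\<Prod>q\<in>prime_factors n. g q) * real n powr \<epsilon>"
      using factors prime_gt_0_nat[OF p(1)]
      by (simp add: nm powr_mult powr_powr powr_realpow[symmetric] mult_ac)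
    finally show ?thesis .
  qed
qed

lemma succ_le_const_mult_two_powr:
  fixes \<epsilon> :: real
  assumes "\<epsilon> > 0"
  obtains c where "c \<ge> 1" "\<And>a::nat. real a + 1 \<le> c * 2 powr (real a * \<epsilon>)"
proof
  define t where "t = min 1 (\<epsilon> * ln 2)"
  have t: "0 < t" "t \<le> 1" "t \<le> \<epsilon> * ln 2" using assms by (auto simp: t_def)
  show "1 \<le> 1 / t" using t by simp
  fix a :: nat
  have "t * (real a + 1) \<le> 1 + real a * \<epsilon> * ln 2"
    using t mult_left_mono[OF t(3), of "real a"] by (simp add: algebra_simps)
  also have "\<dots> \<le> exp (real a * \<epsilon> * ln 2)" by (rule exp_ge_add_one_self)
  also have "\<dots> = 2 powr (real a * \<epsilon>)" by (simp add: powr_def)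
  finally show "real a + 1 \<le> 1 / t * 2 powr (real a * \<epsilon>)" using t by (simp add: field_simps)
qed

theorem divisor_count_le_powr:
  fixes \<epsilon> :: real
  assumes "\<epsilon> > 0"
  obtains C where "C > 0" "\<And>n. n > 0 \<Longrightarrow> real (divisor_count n) \<le> C * real n powr \<epsilon>"
proof -
  obtain c where c: "c \<ge> 1" "\<And>a::nat. real a + 1 \<le> c * 2 powr (real a * \<epsilon>)"
    using succ_le_const_mult_two_powr[OF assms] by blast
  define B where "B = nat \<lceil>2 powr (1 / \<epsilon>)\<rceil>"
  \<comment> \<open>A prime below B contributes a factor at most c, a larger one none, since then p powr \<epsilon> \<ge> 2.\<close>
  define g where "g p = (if p < B then c else 1)" for p :: nat
  have factor: "real a + 1 \<le> g p * real p powr (real a * \<epsilon>)" if "prime p" for p a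
  proof (cases "p < B")
    case True
    have "2 powr (real a * \<epsilon>) \<le> real p powr (real a * \<epsilon>)"
      using prime_ge_2_nat[OF that] assms by (intro powr_mono2) auto
    then show ?thesis using c True by (simp add: g_def) (meson mult_left_mono order_trans zero_le_one)
  next
    case False
    then have "2 powr (1 / \<epsilon>) \<le> real p" unfolding B_def by linarith
    then have "(2 powr (1 / \<epsilon>)) powr \<epsilon> \<le> real p powr \<epsilon>"
      using assms by (intro powr_mono2) auto
    then have "2 \<le> real p powr \<epsilon>" using assms by (simp add: powr_powr)
    have "real a + 1 \<le> 2 ^ a" by (induction a) auto
    also have "\<dots> = 2 powr real a" by (simp add: powr_realpow)
    also have "\<dots> \<le> (real p powr \<epsilon>) powr real a"
      using \<open>2 \<le> real p powr \<epsilon>\<close> by (intro powr_mono2) auto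
    finally show ?thesis using False by (simp add: g_def powr_powr mult.commute)
  qed
  show ?thesis
  proof
    show "c ^ B > 0" using c by simp
    fix n :: nat assume "n > 0"
    have "(\<Prod>p\<in>prime_factors n. g p) = c ^ card (prime_factors n \<inter> {..<B})"
      by (simp add: g_def prod.If_cases Int_def)
    also have "\<dots> \<le> c ^ B"
      using c card_mono[of "{..<B}" "prime_factors n \<inter> {..<B}"] by (intro power_increasing) auto
    finally show "real (divisor_count n) \<le> c ^ B * real n powr \<epsilon>"
      using divisor_count_le_prod_prime_factors[OF factor \<open>n > 0\<close>] by (meson mult_right_mono order_trans powr_ge_zero)
  qed
qed

section \<open>Characters and trigonometric sums\<close>

lemma echar_add: "echar a x * echar b x = echar (a + b) x"
  unfolding echar_def by (simp add: exp_add[symmetric] algebra_simps)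

lemma cnj_echar: "cnj (echar a x) = echar (- a) x"
  unfolding echar_def by (simp add: exp_cnj)

lemma echar_diff: "echar (a - b) x = echar a x * cnj (echar b x)"
  by (simp add: cnj_echar echar_add)

lemma norm_echar [simp]: "norm (echar a x) = 1"
  unfolding echar_def by (simp add: norm_exp_eq_Re)

lemma Re_echar: "Re (echar n x) = cos (2 * pi * real_of_int n * x)"
  unfolding echar_def by (simp add: Re_exp mult_ac)

lemma continuous_on_echar [continuous_intros]: "continuous_on S (echar k)"
  unfolding echar_def by (intro continuous_intros)

lemma has_integral_echar: "(echar k has_integral (if k = 0 then 1 else 0)) {0..1}"
proof (cases "k = 0")
  case True
  have "echar 0 = (\<lambda>_. 1)" by (simp add: echar_def fun_eq_iff)
  then show ?thesis using True has_integral_const_real[of "1::complex" 0 1] by simp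
next
  case False
  define c :: complex where "c = 2 * of_real pi * \<i> * of_int k"
  have "c \<noteq> 0" using False by (simp add: c_def)
  have e: "echar k = (\<lambda>x. exp (c * of_real x))"
    unfolding echar_def c_def by (simp add: mult_ac)
  have "((\<lambda>x. exp (c * x) / c) has_vector_derivative exp (c * t)) (at t within {0..1})" for t
    using \<open>c \<noteq> 0\<close>
    by (intro derivative_eq_intros has_complex_derivative_imp_has_vector_derivative [unfolded o_def] | simp)+
  then have "((\<lambda>t. exp (c * of_real t)) has_integral exp (c * of_real 1) / c - exp (c * of_real 0) / c) {0..1}"
    by (meson fundamental_theorem_of_calculus zero_le_one)
  moreover have "exp (c * of_real 1) = 1"
    unfolding c_def by (simp add: exp_eq_1)
  ultimately show ?thesis using False by (simp add: e)
qed

lemma has_integral_mult_echar: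
  "((\<lambda>x. c * echar k x) has_integral (if k = 0 then c else 0)) {0..1}"
  using has_integral_mult_right[OF has_integral_echar[of k], of c] by (simp split: if_splits)

lemma set_borel_integral_Icc_eq_integral:
  fixes f :: "real \<Rightarrow> 'b::euclidean_space"
  assumes "continuous_on {a..b} f"
  shows "(LINT x:{a..b}|lborel. f x) = integral {a..b} f"
  by (rule set_borel_integral_eq_integral(2)[OF borel_integrable_atLeastAtMost'[OF assms]])

lemma int_square_eq_iff: "int (a\<^sup>2) = int (c\<^sup>2) \<longleftrightarrow> a = c"
  by (simp only: of_nat_eq_iff) (simp add: power2_eq_iff_nonneg)

lemma fourier_coeff_suminf_echar:
  fixes c :: "nat \<Rightarrow> complex" and \<nu> :: "nat \<Rightarrow> int"
  assumes c: "summable (\<lambda>i. norm (c i))"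
  shows "fourier_coeff (\<lambda>x. \<Sum>i. c i * echar (\<nu> i) x) n = (\<Sum>i. if \<nu> i = n then c i else 0)"
proof -
  define F where "F i x = indicator {0..1} x *\<^sub>R (c i * echar (\<nu> i - n) x)" for i x
  have norm_F: "norm (F i x) = indicator {0..1} x * norm (c i)" for i x
    by (simp add: F_def indicator_def norm_mult)
  have summable_F: "summable (\<lambda>i. c i * echar (\<nu> i - n) x)" for x
    by (rule summable_norm_cancel) (simp add: norm_mult c)
  have "(\<Sum>i. c i * echar (\<nu> i) x) * cnj (echar n x) = (\<Sum>i. c i * echar (\<nu> i - n) x)" for x
  proof -
    have "summable (\<lambda>i. c i * echar (\<nu> i) x)"
      by (rule summable_norm_cancel) (simp add: norm_mult c)
    then show ?thesis by (simp add: suminf_mult2 echar_diff mult.assoc)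
  qed
  then have series: "indicator {0..1} x *\<^sub>R ((\<Sum>i. c i * echar (\<nu> i) x) * cnj (echar n x)) = (\<Sum>i. F i x)" for x
    unfolding F_def using suminf_scaleR_right[OF summable_F] by simp
  have set_integral_F: "(\<integral>x. F i x \<partial>lborel) = integral {0..1} (\<lambda>x. c i * echar (\<nu> i - n) x)" for i
    unfolding F_def set_lebesgue_integral_def[symmetric]
    by (intro set_borel_integral_Icc_eq_integral continuous_intros)
  have integrable_F: "integrable lborel (F i)" for i
    unfolding F_def set_integrable_def[symmetric]
    by (intro borel_integrable_atLeastAtMost' continuous_intros)
  have integral_norm_F: "(\<integral>x. norm (F i x) \<partial>lborel) = norm (c i)" for i
    using set_borel_integral_Icc_eq_integral[of 0 1 "\<lambda>_. norm (c i)"]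
    by (simp add: norm_F set_lebesgue_integral_def mult.commute)
  have "fourier_coeff (\<lambda>x. \<Sum>i. c i * echar (\<nu> i) x) n = (\<integral>x. (\<Sum>i. F i x) \<partial>lborel)"
    unfolding fourier_coeff_def set_lebesgue_integral_def series ..
  also have "\<dots> = (\<Sum>i. (\<integral>x. F i x \<partial>lborel))"
    using c by (intro integral_suminf integrable_F AE_I2) (simp_all add: norm_F integral_norm_F)
  also have "\<dots> = (\<Sum>i. if \<nu> i = n then c i else 0)"
    by (intro arg_cong[where f=suminf] ext) (simp add: set_integral_F integral_unique[OF has_integral_echar])
  finally show ?thesis .
qed

definition sq_trig_poly :: "nat set \<Rightarrow> (nat \<Rightarrow> real) \<Rightarrow> real \<Rightarrow> complex" where
  "sq_trig_poly M w x = (\<Sum>m\<in>M. of_real (w m) * echar (int (m\<^sup>2)) x)"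

lemma continuous_on_sq_trig_poly [continuous_intros]: "continuous_on S (sq_trig_poly M w)"
  unfolding sq_trig_poly_def by (intro continuous_intros)

lemma norm_sq_trig_poly_power2:
  "of_real (norm (sq_trig_poly M w x) ^ 2) =
     (\<Sum>a\<in>M. \<Sum>c\<in>M. of_real (w a * w c) * echar (int (a\<^sup>2) - int (c\<^sup>2)) x)"
  unfolding complex_norm_square sq_trig_poly_def cnj_sum sum_product
  by (intro sum.cong refl) (simp add: echar_diff mult_ac)

lemma has_integral_norm_sq_trig_poly_power2:
  assumes "finite M"
  shows "((\<lambda>x. norm (sq_trig_poly M w x) ^ 2) has_integral (\<Sum>m\<in>M. (w m)\<^sup>2)) {0..1}"
proof -
  have "((\<lambda>x. \<Sum>a\<in>M. \<Sum>c\<in>M. of_real (w a * w c) * echar (int (a\<^sup>2) - int (c\<^sup>2)) x) has_integral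
        (\<Sum>a\<in>M. \<Sum>c\<in>M. if int (a\<^sup>2) - int (c\<^sup>2) = 0 then of_real (w a * w c) else 0)) {0..1}"
    using assms by (intro has_integral_sum has_integral_mult_echar)
  also have "(\<Sum>a\<in>M. \<Sum>c\<in>M. if int (a\<^sup>2) - int (c\<^sup>2) = 0 then of_real (w a * w c) else 0)
      = (\<Sum>a\<in>M. \<Sum>c\<in>M. if a = c then of_real (w a * w c) else 0 :: complex)"
    by (intro sum.cong refl) (simp add: int_square_eq_iff)
  also have "\<dots> = of_real (\<Sum>m\<in>M. (w m)\<^sup>2)"
    using assms by (simp add: power2_eq_square)
  finally have "((\<lambda>x. of_real (norm (sq_trig_poly M w x) ^ 2)) has_integral
      (of_real (\<Sum>m\<in>M. (w m)\<^sup>2) :: complex)) {0..1}"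
    by (simp only: norm_sq_trig_poly_power2)
  from has_integral_Re[OF this] show ?thesis by simp
qed

lemma norm_sq_trig_poly_le: "norm (sq_trig_poly M w x) \<le> (\<Sum>m\<in>M. \<bar>w m\<bar>)"
  unfolding sq_trig_poly_def by (rule order_trans[OF norm_sum]) (simp add: norm_mult)

lemma norm_sq_trig_poly_ge_near_zero:
  assumes w: "\<And>m. m \<in> M \<Longrightarrow> 0 \<le> w m" and Q: "\<And>m. m \<in> M \<Longrightarrow> real m ^ 2 \<le> Q" "Q > 0"
    and x: "0 \<le> x" "x \<le> 1 / (6 * Q)"
  shows "(\<Sum>m\<in>M. w m) / 2 \<le> norm (sq_trig_poly M w x)"
proof -
  have "(\<Sum>m\<in>M. w m) / 2 = (\<Sum>m\<in>M. w m * (1 / 2))" by (simp add: sum_divide_distrib)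
  also have "\<dots> \<le> (\<Sum>m\<in>M. w m * cos (2 * pi * real (m\<^sup>2) * x))"
  proof (intro sum_mono mult_left_mono w)
    fix m assume m: "m \<in> M"
    have "2 * pi * real (m\<^sup>2) * x \<le> 2 * pi * Q * (1 / (6 * Q))"
      using Q(1)[OF m] x Q(2) by (intro mult_mono) (auto intro: mult_left_mono)
    then have "2 * pi * real (m\<^sup>2) * x \<le> pi / 3" using Q(2) by simp
    then have "cos (pi / 3) \<le> cos (2 * pi * real (m\<^sup>2) * x)"
      using x by (intro cos_monotone_0_pi_le) auto
    then show "1 / 2 \<le> cos (2 * pi * real (m\<^sup>2) * x)" by (simp add: cos_60)
  qed
  also have "\<dots> = Re (sq_trig_poly M w x)"
    unfolding sq_trig_poly_def by (simp add: Re_echar)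
  also have "\<dots> \<le> norm (sq_trig_poly M w x)" by (rule complex_Re_le_cmod)
  finally show ?thesis .
qed

lemma has_integral_norm_sq_trig_poly_power4:
  assumes "finite M"
  shows "((\<lambda>x. norm (sq_trig_poly M w x) ^ 4) has_integral
     (\<Sum>a\<in>M. \<Sum>b\<in>M. \<Sum>c\<in>M. \<Sum>d\<in>M.
        if a\<^sup>2 + b\<^sup>2 = c\<^sup>2 + d\<^sup>2 then w a * w c * (w b * w d) else 0)) {0..1}"
proof -
  let ?E = "\<lambda>a b c d. int (a\<^sup>2) - int (c\<^sup>2) + (int (b\<^sup>2) - int (d\<^sup>2))"
  have expand: "of_real (norm (sq_trig_poly M w x) ^ 4) =
     (\<Sum>a\<in>M. \<Sum>b\<in>M. \<Sum>c\<in>M. \<Sum>d\<in>M. of_real (w a * w c * (w b * w d)) * echar (?E a b c d) x)" for x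
  proof -
    have "of_real (norm (sq_trig_poly M w x) ^ 4) =
        of_real (norm (sq_trig_poly M w x) ^ 2) * (of_real (norm (sq_trig_poly M w x) ^ 2) :: complex)"
      by (simp flip: of_real_mult power_add)
    also have "\<dots> = (\<Sum>a\<in>M. \<Sum>b\<in>M. \<Sum>c\<in>M. \<Sum>d\<in>M.
        of_real (w a * w c) * echar (int (a\<^sup>2) - int (c\<^sup>2)) x * (of_real (w b * w d) * echar (int (b\<^sup>2) - int (d\<^sup>2)) x))"
      by (simp only: norm_sq_trig_poly_power2 sum_product)
    finally show ?thesis
      by (simp add: echar_add[symmetric] mult_ac)
  qed
  have E: "?E a b c d = 0 \<longleftrightarrow> a\<^sup>2 + b\<^sup>2 = c\<^sup>2 + d\<^sup>2" for a b c d
    by (simp only: of_nat_eq_iff[where 'a=int, symmetric] of_nat_add) linarith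
  have "((\<lambda>x. \<Sum>a\<in>M. \<Sum>b\<in>M. \<Sum>c\<in>M. \<Sum>d\<in>M. of_real (w a * w c * (w b * w d)) * echar (?E a b c d) x)
      has_integral (\<Sum>a\<in>M. \<Sum>b\<in>M. \<Sum>c\<in>M. \<Sum>d\<in>M.
        if ?E a b c d = 0 then of_real (w a * w c * (w b * w d)) else 0)) {0..1}"
    using assms by (intro has_integral_sum has_integral_mult_echar)
  then have "((\<lambda>x. of_real (norm (sq_trig_poly M w x) ^ 4)) has_integral
     (of_real (\<Sum>a\<in>M. \<Sum>b\<in>M. \<Sum>c\<in>M. \<Sum>d\<in>M.
        if a\<^sup>2 + b\<^sup>2 = c\<^sup>2 + d\<^sup>2 then w a * w c * (w b * w d) else 0) :: complex)) {0..1}"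
    by (simp only: expand E of_real_sum if_distrib[of of_real] of_real_0)
  from has_integral_Re[OF this] show ?thesis by simp
qed

definition square_energy :: "nat set \<Rightarrow> nat" where
  "square_energy M = (\<Sum>a\<in>M. \<Sum>b\<in>M. \<Sum>c\<in>M. \<Sum>d\<in>M. of_bool (a\<^sup>2 + b\<^sup>2 = c\<^sup>2 + d\<^sup>2))"

lemma integral_norm_sq_trig_poly_power4_le:
  assumes "finite M" and w: "\<And>m. m \<in> M \<Longrightarrow> 0 \<le> w m \<and> w m \<le> W"
  shows "integral {0..1} (\<lambda>x. norm (sq_trig_poly M w x) ^ 4) \<le> W ^ 4 * real (square_energy M)"
proof -
  have "integral {0..1} (\<lambda>x. norm (sq_trig_poly M w x) ^ 4) =
     (\<Sum>a\<in>M. \<Sum>b\<in>M. \<Sum>c\<in>M. \<Sum>d\<in>M.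
        if a\<^sup>2 + b\<^sup>2 = c\<^sup>2 + d\<^sup>2 then w a * w c * (w b * w d) else 0)"
    by (rule integral_unique[OF has_integral_norm_sq_trig_poly_power4[OF assms(1)]])
  also have "\<dots> \<le> (\<Sum>a\<in>M. \<Sum>b\<in>M. \<Sum>c\<in>M. \<Sum>d\<in>M. W ^ 4 * of_bool (a\<^sup>2 + b\<^sup>2 = c\<^sup>2 + d\<^sup>2))"
  proof (intro sum_mono)
    fix a b c d assume "a \<in> M" "b \<in> M" "c \<in> M" "d \<in> M"
    then have "w a * w c * (w b * w d) \<le> W * W * (W * W)"
      using w by (intro mult_mono) (auto intro: mult_nonneg_nonneg order_trans)
    then show "(if a\<^sup>2 + b\<^sup>2 = c\<^sup>2 + d\<^sup>2 then w a * w c * (w b * w d) else 0)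
        \<le> W ^ 4 * of_bool (a\<^sup>2 + b\<^sup>2 = c\<^sup>2 + d\<^sup>2)"
      by (simp add: power4_eq_xxxx mult_ac)
  qed
  also have "\<dots> = W ^ 4 * real (square_energy M)"
    by (simp add: square_energy_def sum_distrib_left)
  finally show ?thesis .
qed

lemma card_sq_eq_sq_add_le:
  assumes "h > 0"
  shows "card {(x, y) \<in> M \<times> M. y\<^sup>2 = x\<^sup>2 + h} \<le> divisor_count h"
proof -
  let ?S = "{(x, y) \<in> M \<times> M. y\<^sup>2 = x\<^sup>2 + h}"
  \<comment> \<open>The divisor y - x of h determines the solution (x, y).\<close>
  have factor: "\<exists>d. y = x + d \<and> h = d * (2 * x + d)" if "y\<^sup>2 = x\<^sup>2 + h" for x y :: nat
  proof -
    have "x < y" using that assms power_less_imp_less_base[of x 2 y] by simp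
    then obtain d where "y = x + d" using less_imp_add_positive by blast
    then show ?thesis using that by (simp add: power2_eq_square algebra_simps)
  qed
  have "inj_on (\<lambda>(x, y). y - x) ?S"
  proof (rule inj_onI, clarsimp)
    fix x y x' y'
    assume "y\<^sup>2 = x\<^sup>2 + h" "y'\<^sup>2 = x'\<^sup>2 + h" "y - x = y' - x'"
    with factor obtain d d' where "y = x + d" "h = d * (2 * x + d)" "y' = x' + d'" "h = d' * (2 * x' + d')"
      by metis
    with \<open>y - x = y' - x'\<close> \<open>h > 0\<close> show "x = x' \<and> y = y'" by auto
  qed
  moreover have "(\<lambda>(x, y). y - x) ` ?S \<subseteq> {d. d dvd h}"
    using factor by fastforce
  ultimately have "card ?S \<le> card {d. d dvd h}"
    using assms by (intro card_inj_on_le) auto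
  then show ?thesis by (simp add: divisor_count_def)
qed

lemma card_sum_squares_eq_le:
  assumes "c < a"
  shows "card {(b, d) \<in> M \<times> M. a\<^sup>2 + b\<^sup>2 = c\<^sup>2 + d\<^sup>2} \<le> divisor_count (a\<^sup>2 - c\<^sup>2)"
proof -
  have "c\<^sup>2 < a\<^sup>2" using assms by (simp add: power_strict_mono)
  then have "{(b, d) \<in> M \<times> M. a\<^sup>2 + b\<^sup>2 = c\<^sup>2 + d\<^sup>2} = {(b, d) \<in> M \<times> M. d\<^sup>2 = b\<^sup>2 + (a\<^sup>2 - c\<^sup>2)}"
    by auto
  then show ?thesis using card_sq_eq_sq_add_le[of "a\<^sup>2 - c\<^sup>2" M] \<open>c\<^sup>2 < a\<^sup>2\<close> by simp
qed

lemma square_energy_le: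
  assumes M: "finite M" "M \<subseteq> {..K}" and "D \<ge> 0"
    and D: "\<And>h. 0 < h \<Longrightarrow> h \<le> K\<^sup>2 \<Longrightarrow> real (divisor_count h) \<le> D"
  shows "real (square_energy M) \<le> real (card M) ^ 2 * (1 + D)"
proof -
  let ?S = "\<lambda>a c. {(b, d) \<in> M \<times> M. a\<^sup>2 + b\<^sup>2 = c\<^sup>2 + d\<^sup>2}"
  have off_diagonal: "real (card (?S a c)) \<le> D" if "c < a" "a \<in> M" for a c
  proof -
    have "a\<^sup>2 - c\<^sup>2 \<le> K\<^sup>2" using M(2) \<open>a \<in> M\<close> by (auto intro: le_trans[OF diff_le_self] power_mono)
    moreover have "0 < a\<^sup>2 - c\<^sup>2" using \<open>c < a\<close> by (simp add: power_strict_mono)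
    ultimately show ?thesis
      using D card_sum_squares_eq_le[OF \<open>c < a\<close>, of M] by (meson of_nat_le_iff order_trans)
  qed
  have inner: "real (card (?S a c)) \<le> (if a = c then real (card M) else 0) + D" if "a \<in> M" "c \<in> M" for a c
  proof (cases a c rule: linorder_cases)
    case less
    have "?S a c = prod.swap ` ?S c a" by auto
    then have "card (?S a c) = card (?S c a)" by (simp add: card_image)
    then show ?thesis using off_diagonal[OF less \<open>c \<in> M\<close>] less by simp
  next
    case equal
    then have "?S a c = (\<lambda>b. (b, b)) ` M" by auto
    then show ?thesis using card_image_le[OF M(1), of "\<lambda>b. (b, b)"] equal \<open>D \<ge> 0\<close> by simp
  next
    case greater
    then show ?thesis using off_diagonal[OF greater \<open>a \<in> M\<close>] by simp
  qed
  have "square_energy M = (\<Sum>a\<in>M. \<Sum>c\<in>M. \<Sum>b\<in>M. \<Sum>d\<in>M. of_bool (a\<^sup>2 + b\<^sup>2 = c\<^sup>2 + d\<^sup>2))"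
    unfolding square_energy_def by (rule sum.cong[OF refl], rule sum.swap)
  also have "\<dots> = (\<Sum>a\<in>M. \<Sum>c\<in>M. card (?S a c))"
  proof (intro sum.cong refl)
    fix a c
    have "(\<Sum>b\<in>M. \<Sum>d\<in>M. of_bool (a\<^sup>2 + b\<^sup>2 = c\<^sup>2 + d\<^sup>2)) =
        (\<Sum>p\<in>M \<times> M. of_bool (a\<^sup>2 + (fst p)\<^sup>2 = c\<^sup>2 + (snd p)\<^sup>2))"
      by (simp add: sum.cartesian_product case_prod_beta)
    also have "\<dots> = card {p \<in> M \<times> M. a\<^sup>2 + (fst p)\<^sup>2 = c\<^sup>2 + (snd p)\<^sup>2}"
      using M(1) by (simp add: sum_of_bool_eq Int_def)
    also have "{p \<in> M \<times> M. a\<^sup>2 + (fst p)\<^sup>2 = c\<^sup>2 + (snd p)\<^sup>2} = ?S a c" by auto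
    finally show "(\<Sum>b\<in>M. \<Sum>d\<in>M. of_bool (a\<^sup>2 + b\<^sup>2 = c\<^sup>2 + d\<^sup>2)) = card (?S a c)" .
  qed
  finally have "real (square_energy M) = (\<Sum>a\<in>M. \<Sum>c\<in>M. real (card (?S a c)))" by simp
  also have "\<dots> \<le> (\<Sum>a\<in>M. \<Sum>c\<in>M. (if a = c then real (card M) else 0) + D)"
    by (intro sum_mono inner)
  also have "\<dots> = real (card M) ^ 2 * (1 + D)"
    using M(1) by (simp add: sum.distrib power2_eq_square algebra_simps)
  finally show ?thesis .
qed

section \<open>Moment inequalities\<close>

lemma powr_le_truncated:
  fixes x l t r :: real
  assumes "0 \<le> x" "0 < l" "0 \<le> t" "t \<le> r"
  shows "x powr t \<le> l powr t + l powr (t - r) * x powr r"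
proof (cases "x \<le> l")
  case True
  then have "x powr t \<le> l powr t" using assms by (intro powr_mono2) auto
  then show ?thesis by (simp add: add_increasing2)
next
  case False
  then have "x powr t = x powr r * x powr (t - r)" using assms by (simp flip: powr_add)
  also have "\<dots> \<le> x powr r * l powr (t - r)"
    using False assms by (intro mult_left_mono powr_mono2') auto
  finally show ?thesis by (simp add: mult.commute add_increasing)
qed

lemma powr_le_interpolated:
  fixes x l q t r :: real
  assumes "0 \<le> x" "0 < l" "q \<le> t" "t \<le> r"
  shows "x powr t \<le> l powr (t - q) * x powr q + l powr (t - r) * x powr r"
proof (cases "x \<le> l")
  case True
  show ?thesis
  proof (cases "x = 0")
    case False
    then have "x powr t = x powr (t - q) * x powr q" using assms by (simp flip: powr_add)
    also have "\<dots> \<le> l powr (t - q) * x powr q"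
      using True False assms by (intro mult_right_mono powr_mono2) auto
    finally show ?thesis by (simp add: add_increasing2)
  qed simp
next
  case False
  then have "x powr t = x powr r * x powr (t - r)" using assms by (simp flip: powr_add)
  also have "\<dots> \<le> x powr r * l powr (t - r)"
    using False assms by (intro mult_left_mono powr_mono2') auto
  finally show ?thesis by (simp add: mult.commute add_increasing)
qed

lemma powr_le_bound_powr_mult:
  fixes x B t r :: real
  assumes "0 \<le> x" "x \<le> B" "t \<le> r"
  shows "x powr r \<le> B powr (r - t) * x powr t"
proof (cases "x = 0")
  case False
  then have "x powr r = x powr (r - t) * x powr t" using assms by (simp flip: powr_add)
  also have "\<dots> \<le> B powr (r - t) * x powr t"
    using False assms by (intro mult_right_mono powr_mono2) auto
  finally show ?thesis .
qed simp

context
  fixes f :: "real \<Rightarrow> real"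
  assumes f_cont: "continuous_on {0..1} f" and f_nonneg: "\<And>x. 0 \<le> f x"
begin

lemma integrable_powr: "q > 0 \<Longrightarrow> (\<lambda>x. f x powr q) integrable_on {0..1}"
  by (intro integrable_continuous_interval continuous_on_powr' f_cont continuous_on_const)
    (auto simp: f_nonneg)

lemma integral_powr_le_truncated:
  assumes "0 < t" "t \<le> r" "0 < l"
  shows "integral {0..1} (\<lambda>x. f x powr t) \<le> l powr t + l powr (t - r) * integral {0..1} (\<lambda>x. f x powr r)"
proof -
  have "integral {0..1} (\<lambda>x. f x powr t) \<le> integral {0..1} (\<lambda>x. l powr t + l powr (t - r) * f x powr r)"
    using assms
    by (intro integral_le integrable_powr integrable_add integrable_on_mult_right integrable_const_ivl
        powr_le_truncated f_nonneg) auto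
  also have "\<dots> = l powr t + l powr (t - r) * integral {0..1} (\<lambda>x. f x powr r)"
    using assms by (subst integral_add) (auto intro!: integrable_powr integrable_on_mult_right)
  finally show ?thesis .
qed

lemma integral_powr_le_interpolated:
  assumes "0 < q" "q \<le> t" "t \<le> r" "0 < l"
  shows "integral {0..1} (\<lambda>x. f x powr t) \<le>
    l powr (t - q) * integral {0..1} (\<lambda>x. f x powr q) + l powr (t - r) * integral {0..1} (\<lambda>x. f x powr r)"
proof -
  have "integral {0..1} (\<lambda>x. f x powr t) \<le>
      integral {0..1} (\<lambda>x. l powr (t - q) * f x powr q + l powr (t - r) * f x powr r)"
    using assms
    by (intro integral_le integrable_powr integrable_add integrable_on_mult_right
        powr_le_interpolated f_nonneg) auto
  also have "\<dots> = l powr (t - q) * integral {0..1} (\<lambda>x. f x powr q) + l powr (t - r) * integral {0..1} (\<lambda>x. f x powr r)"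
    using assms by (subst integral_add) (auto intro!: integrable_powr integrable_on_mult_right)
  finally show ?thesis .
qed

lemma integral_powr_le_bound_powr_mult:
  assumes "0 < t" "t \<le> r" and B: "\<And>x. x \<in> {0..1} \<Longrightarrow> f x \<le> B"
  shows "integral {0..1} (\<lambda>x. f x powr r) \<le> B powr (r - t) * integral {0..1} (\<lambda>x. f x powr t)"
proof -
  have "integral {0..1} (\<lambda>x. f x powr r) \<le> integral {0..1} (\<lambda>x. B powr (r - t) * f x powr t)"
    using assms
    by (intro integral_le integrable_powr integrable_on_mult_right powr_le_bound_powr_mult f_nonneg) auto
  then show ?thesis by simp
qed

lemma integral_powr_ge_initial_segment:
  assumes "0 < p" "0 < d" "d \<le> 1" "0 \<le> b" and b: "\<And>x. x \<in> {0..d} \<Longrightarrow> b \<le> f x"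
  shows "d * b powr p \<le> integral {0..1} (\<lambda>x. f x powr p)"
proof -
  have int: "(\<lambda>x. f x powr p) integrable_on {0..d}"
    by (rule integrable_on_subinterval[OF integrable_powr[OF \<open>0 < p\<close>]]) (use assms in auto)
  have "d * b powr p = integral {0..d} (\<lambda>x. b powr p)" using assms by simp
  also have "\<dots> \<le> integral {0..d} (\<lambda>x. f x powr p)"
    using b assms by (intro integral_le integrable_const_ivl int powr_mono2) auto
  also have "\<dots> \<le> integral {0..1} (\<lambda>x. f x powr p)"
    using assms int integrable_powr by (intro integral_subset_le) auto
  finally show ?thesis .
qed

lemma integral_powr_ge_power_of_lower:
  assumes "0 < t" "t \<le> r"
  shows "(integral {0..1} (\<lambda>x. f x powr t) / 2) powr (r / t) \<le> integral {0..1} (\<lambda>x. f x powr r)"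
proof -
  let ?J = "\<lambda>q. integral {0..1} (\<lambda>x. f x powr q)"
  have J_nonneg: "?J q \<ge> 0" if "q > 0" for q
    using that by (intro integral_nonneg integrable_powr) auto
  show ?thesis
  proof (cases "?J t = 0")
    case True
    then show ?thesis using J_nonneg assms by simp
  next
    case False
    then have "?J t > 0" using J_nonneg[OF \<open>0 < t\<close>] by simp
    define l where "l = (?J t / 2) powr (1 / t)"
    have "l > 0" using \<open>?J t > 0\<close> by (simp add: l_def)
    have l_t: "l powr t = ?J t / 2" using \<open>?J t > 0\<close> assms by (simp add: l_def powr_powr)
    have "?J t \<le> l powr t + l powr (t - r) * ?J r"
      using assms \<open>l > 0\<close> by (rule integral_powr_le_truncated)
    then have "l powr (r - t) * (?J t / 2) \<le> l powr (r - t) * (l powr (t - r) * ?J r)"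
      using l_t by (intro mult_left_mono) auto
    also have "\<dots> = ?J r" using \<open>l > 0\<close> by (simp flip: powr_add mult.assoc)
    finally have "l powr (r - t) * l powr t \<le> ?J r" by (simp add: l_t)
    moreover have "l powr (r - t) * l powr t = l powr r" by (simp flip: powr_add)
    moreover have "l powr r = (?J t / 2) powr (r / t)" by (simp add: l_def powr_powr)
    ultimately show ?thesis by simp
  qed
qed

lemma integral_powr_ge_interpolated:
  assumes "0 < q" "q \<le> t" "t \<le> r" "0 < l"
    and small: "l powr (t - r) * integral {0..1} (\<lambda>x. f x powr r) \<le> integral {0..1} (\<lambda>x. f x powr t) / 2"
  shows "l powr (q - t) * (integral {0..1} (\<lambda>x. f x powr t) / 2) \<le> integral {0..1} (\<lambda>x. f x powr q)"
proof -
  let ?J = "\<lambda>q. integral {0..1} (\<lambda>x. f x powr q)"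
  have "?J t \<le> l powr (t - q) * ?J q + l powr (t - r) * ?J r"
    using assms(1-4) by (rule integral_powr_le_interpolated)
  then have "l powr (q - t) * (?J t / 2) \<le> l powr (q - t) * (l powr (t - q) * ?J q)"
    using small by (intro mult_left_mono) auto
  also have "\<dots> = ?J q" using \<open>l > 0\<close> by (simp flip: powr_add mult.assoc)
  finally show ?thesis .
qed

end

section \<open>The Littlewood-Paley blocks of R_s\<close>

lemma fourier_coeff_R_fun:
  assumes "s > 1/2"
  shows "fourier_coeff (R_fun s) n =
    (\<Sum>i. if int ((Suc i)\<^sup>2) = n then of_real (real (Suc i) powr (-2 * s)) else 0)"
proof -
  have "summable (\<lambda>i. real i powr (-2 * s))" using assms by (simp add: summable_real_powr_iff)
  then have "summable (\<lambda>i. norm (of_real (real (Suc i) powr (-2 * s)) :: complex))"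
    using summable_Suc_iff[of "\<lambda>i. real i powr (-2 * s)"] by simp
  then show ?thesis unfolding R_fun_def[abs_def] by (rule fourier_coeff_suminf_echar)
qed

lemma fourier_coeff_R_fun_square:
  assumes "s > 1/2" "m \<ge> 1"
  shows "fourier_coeff (R_fun s) (int (m\<^sup>2)) = of_real (real m powr (-2 * s))"
proof -
  have "int ((Suc i)\<^sup>2) = int (m\<^sup>2) \<longleftrightarrow> i = m - 1" for i
    using assms(2) by (auto simp only: int_square_eq_iff)
  then show ?thesis
    using sums_unique[OF sums_single[of "m - 1" "\<lambda>i. of_real (real (Suc i) powr (-2 * s)) :: complex"]] assms
    by (simp add: fourier_coeff_R_fun)
qed

lemma fourier_coeff_R_fun_nonsquare:
  assumes "s > 1/2" "\<And>m. m \<ge> 1 \<Longrightarrow> n \<noteq> int (m\<^sup>2)"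
  shows "fourier_coeff (R_fun s) n = 0"
proof -
  have "int ((Suc i)\<^sup>2) \<noteq> n" for i using assms(2)[of "Suc i"] by auto
  then show ?thesis by (simp add: fourier_coeff_R_fun[OF assms(1)])
qed

definition R_block_freqs :: "nat \<Rightarrow> nat \<Rightarrow> nat set" where
  "R_block_freqs A k = {m. m \<ge> 1 \<and> int (m\<^sup>2) \<in> LP_block_set A k}"

lemma finite_LP_block_set: "finite (LP_block_set A k)"
proof (rule finite_subset)
  show "LP_block_set A k \<subseteq> {- (int A ^ (k + 1)) .. int A ^ (k + 1)}"
    unfolding LP_block_set_def by (auto simp: abs_less_iff)
qed simp

lemma inj_on_int_square: "inj_on (\<lambda>m. int (m\<^sup>2)) M"
  by (intro inj_onI) (simp add: int_square_eq_iff)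

lemma finite_R_block_freqs: "finite (R_block_freqs A k)"
proof -
  have "(\<lambda>m. int (m\<^sup>2)) ` R_block_freqs A k \<subseteq> LP_block_set A k"
    unfolding R_block_freqs_def by auto
  then show ?thesis
    using finite_LP_block_set inj_on_int_square by (metis finite_imageD finite_subset)
qed

lemma LP_block_R_fun:
  assumes "s > 1/2"
  shows "LP_block A k (R_fun s) = sq_trig_poly (R_block_freqs A k) (\<lambda>m. real m powr (-2 * s))"
proof
  fix x
  let ?sq = "\<lambda>m::nat. int (m\<^sup>2)" and ?t = "\<lambda>n. fourier_coeff (R_fun s) n * echar n x"
  have "sq_trig_poly (R_block_freqs A k) (\<lambda>m. real m powr (-2 * s)) x = (\<Sum>m\<in>R_block_freqs A k. ?t (?sq m))"
    unfolding sq_trig_poly_def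
  proof (intro sum.cong refl)
    fix m assume "m \<in> R_block_freqs A k"
    then have "m \<ge> 1" by (simp add: R_block_freqs_def)
    then show "of_real (real m powr (-2 * s)) * echar (int (m\<^sup>2)) x = ?t (?sq m)"
      by (simp only: fourier_coeff_R_fun_square[OF assms])
  qed
  also have "\<dots> = (\<Sum>n\<in>?sq ` R_block_freqs A k. ?t n)"
    by (simp only: sum.reindex[OF inj_on_int_square] comp_def)
  also have "\<dots> = (\<Sum>n\<in>LP_block_set A k. ?t n)"
  proof (rule sum.mono_neutral_left[OF finite_LP_block_set])
    show "?sq ` R_block_freqs A k \<subseteq> LP_block_set A k" unfolding R_block_freqs_def by auto
    show "\<forall>n\<in>LP_block_set A k - ?sq ` R_block_freqs A k. ?t n = 0"
      using fourier_coeff_R_fun_nonsquare[OF assms] unfolding R_block_freqs_def by fastforce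
  qed
  finally show "LP_block A k (R_fun s) x = sq_trig_poly (R_block_freqs A k) (\<lambda>m. real m powr (-2 * s)) x"
    unfolding LP_block_def by simp
qed

lemma mem_R_block_freqs_iff:
  assumes "k \<ge> 1"
  shows "m \<in> R_block_freqs A k \<longleftrightarrow> real A ^ k \<le> real m ^ 2 \<and> real m ^ 2 < real A ^ (k + 1)"
proof -
  have "m \<in> R_block_freqs A k \<longleftrightarrow> m \<ge> 1 \<and> A ^ k \<le> m ^ 2 \<and> m ^ 2 < A ^ (k + 1)"
    unfolding R_block_freqs_def LP_block_set_def using assms
    by (simp del: of_nat_power of_nat_mult add: of_nat_power[symmetric] of_nat_mult[symmetric])
  also have "\<dots> \<longleftrightarrow> A ^ k \<le> m ^ 2 \<and> m ^ 2 < A ^ (k + 1)"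
    by (cases m) auto
  also have "\<dots> \<longleftrightarrow> real A ^ k \<le> real m ^ 2 \<and> real m ^ 2 < real A ^ (k + 1)"
    by (simp del: of_nat_power of_nat_mult add: of_nat_power[symmetric] of_nat_mult[symmetric])
  finally show ?thesis .
qed

lemma R_block_freqs_subset:
  assumes "k \<ge> 1"
  shows "R_block_freqs A k \<subseteq> {1..nat \<lfloor>sqrt (real A ^ (k + 1))\<rfloor>}"
proof
  fix m assume m: "m \<in> R_block_freqs A k"
  then have "real m < sqrt (real A ^ (k + 1))"
    using mem_R_block_freqs_iff[OF assms] by (auto intro: real_less_rsqrt)
  then show "m \<in> {1..nat \<lfloor>sqrt (real A ^ (k + 1))\<rfloor>}"
    using m by (auto simp: R_block_freqs_def le_nat_floor)
qed

lemma card_R_block_freqs_le: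
  assumes "k \<ge> 1"
  shows "real (card (R_block_freqs A k)) \<le> sqrt (real A ^ (k + 1))"
proof -
  have "card (R_block_freqs A k) \<le> nat \<lfloor>sqrt (real A ^ (k + 1))\<rfloor>"
    using card_mono[OF _ R_block_freqs_subset[OF assms]] by simp
  then have "real (card (R_block_freqs A k)) \<le> real (nat \<lfloor>sqrt (real A ^ (k + 1))\<rfloor>)"
    by (simp only: of_nat_le_iff)
  also have "\<dots> = real_of_int \<lfloor>sqrt (real A ^ (k + 1))\<rfloor>" by simp
  finally show ?thesis by linarith
qed

lemma card_R_block_freqs_ge:
  assumes "k \<ge> 1"
  shows "sqrt (real A ^ (k + 1)) - sqrt (real A ^ k) - 1 \<le> real (card (R_block_freqs A k))"
proof -
  define a where "a = nat \<lceil>sqrt (real A ^ k)\<rceil>"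
  define b where "b = nat \<lceil>sqrt (real A ^ (k + 1))\<rceil>"
  have "{a..<b} \<subseteq> R_block_freqs A k"
  proof
    fix m assume "m \<in> {a..<b}"
    then have "a \<le> m" "m < b" by auto
    then have "\<lceil>sqrt (real A ^ k)\<rceil> \<le> int m" "int m < \<lceil>sqrt (real A ^ (k + 1))\<rceil>"
      unfolding a_def b_def by linarith+
    then have "sqrt (real A ^ k) \<le> real m" "real m < sqrt (real A ^ (k + 1))"
      by (simp_all only: ceiling_le_iff less_ceiling_iff of_int_of_nat_eq)
    then have "sqrt (real A ^ k) ^ 2 \<le> real m ^ 2" "real m ^ 2 < sqrt (real A ^ (k + 1)) ^ 2"
      by (intro power_mono power_strict_mono; simp)+
    then show "m \<in> R_block_freqs A k" using mem_R_block_freqs_iff[OF assms] by simp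
  qed
  then have "card {a..<b} \<le> card (R_block_freqs A k)" by (intro card_mono finite_R_block_freqs)
  then have "real b - real a \<le> real (card (R_block_freqs A k))" by simp
  moreover have "real a = real_of_int \<lceil>sqrt (real A ^ k)\<rceil>" unfolding a_def by simp
  moreover have "sqrt (real A ^ (k + 1)) \<le> real b" unfolding b_def by linarith
  ultimately show ?thesis by linarith
qed

definition R_block_moment :: "real \<Rightarrow> nat \<Rightarrow> nat \<Rightarrow> real \<Rightarrow> real" where
  "R_block_moment s A k q = integral {0..1} (\<lambda>x. norm (LP_block A k (R_fun s) x) powr q)"

lemma continuous_on_norm_LP_block_R_fun:
  "s > 1/2 \<Longrightarrow> continuous_on S (\<lambda>x. norm (LP_block A k (R_fun s) x))"
  by (simp add: LP_block_R_fun continuous_intros)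

lemma Lp_norm_T_LP_block_R_fun:
  assumes "s > 1/2" "p > 0"
  shows "Lp_norm_T p (LP_block A k (R_fun s)) = R_block_moment s A k p powr (1 / p)"
  unfolding Lp_norm_T_def R_block_moment_def using assms
  by (subst set_borel_integral_Icc_eq_integral)
    (auto intro!: continuous_on_powr'[OF continuous_on_norm_LP_block_R_fun continuous_on_const])

lemma besov_inf_R_fun_iff:
  assumes "s > 1/2" "p > 0" "A > 0"
  shows "besov_inf A (\<sigma> / p) p (R_fun s) \<longleftrightarrow>
    bdd_above (range (\<lambda>k. (real A ^ k) powr (\<sigma> / p) * R_block_moment s A k p powr (1 / p)))"
  using assms by (simp add: besov_inf_def Lp_norm_T_LP_block_R_fun powr_powr powr_realpow flip: powr_realpow)

context
  fixes s :: real and A :: nat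
  assumes s: "s > 1/2" and A: "A \<ge> 2"
begin

lemma R_block_weight_bounds:
  assumes "k \<ge> 1" "m \<in> R_block_freqs A k"
  shows "(real A ^ (k + 1)) powr (-s) \<le> real m powr (-2 * s)" "real m powr (-2 * s) \<le> (real A ^ k) powr (-s)"
proof -
  have m: "real A ^ k \<le> real m ^ 2" "real m ^ 2 < real A ^ (k + 1)"
    using assms(2) mem_R_block_freqs_iff[OF assms(1)] by auto
  have "m \<ge> 1" using assms(2) by (simp add: R_block_freqs_def)
  have "real m powr (-2 * s) = (real m ^ 2) powr (-s)"
    by (simp add: powr_powr flip: powr_numeral)
  moreover have "real A ^ k > 0" using A by simp
  ultimately show "(real A ^ (k + 1)) powr (-s) \<le> real m powr (-2 * s)" "real m powr (-2 * s) \<le> (real A ^ k) powr (-s)"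
    using m \<open>m \<ge> 1\<close> s by (auto intro!: powr_mono2')
qed

lemma card_R_block_freqs_ge_eventually:
  obtains c X0 where "c > 0"
    "\<And>k. k \<ge> 1 \<Longrightarrow> X0 \<le> real A ^ k \<Longrightarrow> c * (real A ^ k) powr (1/2) \<le> real (card (R_block_freqs A k))"
proof
  define a where "a = sqrt (real A) - 1"
  have "a > 0" using A by (simp add: a_def)
  then show "a / 2 > 0" by simp
  fix k :: nat assume k: "k \<ge> 1" and X0: "(2 / a) ^ 2 \<le> real A ^ k"
  define X where "X = real A ^ k"
  have "2 / a \<le> sqrt X" using X0 unfolding X_def by (rule real_le_rsqrt)
  then have "1 \<le> a * sqrt X / 2" using \<open>a > 0\<close> by (simp add: field_simps)
  moreover have "sqrt (real A * X) - sqrt X - 1 \<le> real (card (R_block_freqs A k))"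
    using card_R_block_freqs_ge[OF k] by (simp add: X_def)
  moreover have "sqrt (real A * X) - sqrt X = a * sqrt X" by (simp add: a_def real_sqrt_mult algebra_simps)
  ultimately show "a / 2 * (real A ^ k) powr (1/2) \<le> real (card (R_block_freqs A k))"
    using A by (simp add: X_def powr_half_sqrt)
qed

lemma R_block_moment_two:
  "R_block_moment s A k 2 = (\<Sum>m\<in>R_block_freqs A k. (real m powr (-2 * s))\<^sup>2)"
  unfolding R_block_moment_def LP_block_R_fun[OF s]
  by (simp add: powr_numeral integral_unique[OF has_integral_norm_sq_trig_poly_power2[OF finite_R_block_freqs]])

lemma R_block_moment_two_ge_eventually:
  obtains c X0 where "c > 0"
    "\<And>k. k \<ge> 1 \<Longrightarrow> X0 \<le> real A ^ k \<Longrightarrow> c * (real A ^ k) powr (1/2 - 2 * s) \<le> R_block_moment s A k 2"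
proof -
  obtain c X0 where c: "c > 0"
    and N: "\<And>k. k \<ge> 1 \<Longrightarrow> X0 \<le> real A ^ k \<Longrightarrow> c * (real A ^ k) powr (1/2) \<le> real (card (R_block_freqs A k))"
    using card_R_block_freqs_ge_eventually by blast
  show ?thesis
  proof
    show "c * real A powr (-2 * s) > 0" using c A by simp
    fix k :: nat assume k: "k \<ge> 1" and X0: "X0 \<le> real A ^ k"
    define X where "X = real A ^ k"
    have X: "X > 0" using A by (simp add: X_def)
    have "((real A * X) powr (-s))\<^sup>2 = real A powr (-2 * s) * X powr (-2 * s)"
      by (simp add: power2_eq_square powr_mult mult_ac flip: powr_add)
    moreover have "X powr (1/2) * X powr (-2 * s) = X powr (1/2 - 2 * s)" by (simp flip: powr_add)
    ultimately have "c * real A powr (-2 * s) * X powr (1/2 - 2 * s) = c * X powr (1/2) * ((real A * X) powr (-s))\<^sup>2"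
      by (simp add: mult_ac)
    also have "\<dots> \<le> real (card (R_block_freqs A k)) * ((real A * X) powr (-s))\<^sup>2"
      using N[OF k X0] by (intro mult_right_mono) (auto simp: X_def)
    also have "\<dots> = (\<Sum>m\<in>R_block_freqs A k. ((real A ^ (k + 1)) powr (-s))\<^sup>2)"
      by (simp add: X_def)
    also have "\<dots> \<le> R_block_moment s A k 2"
      unfolding R_block_moment_two by (intro sum_mono power_mono R_block_weight_bounds(1)[OF k]) auto
    finally show "c * real A powr (-2 * s) * (real A ^ k) powr (1/2 - 2 * s) \<le> R_block_moment s A k 2"
      by (simp add: X_def)
  qed
qed

lemma R_block_moment_four_le_energy:
  assumes "k \<ge> 1"
  shows "R_block_moment s A k 4 \<le> ((real A ^ k) powr (-s)) ^ 4 * real (square_energy (R_block_freqs A k))"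
proof -
  have "R_block_moment s A k 4 =
      integral {0..1} (\<lambda>x. norm (sq_trig_poly (R_block_freqs A k) (\<lambda>m. real m powr (-2 * s)) x) ^ 4)"
    unfolding R_block_moment_def LP_block_R_fun[OF s] by (simp add: powr_numeral)
  also have "\<dots> \<le> ((real A ^ k) powr (-s)) ^ 4 * real (square_energy (R_block_freqs A k))"
    using R_block_weight_bounds(2)[OF assms]
    by (intro integral_norm_sq_trig_poly_power4_le finite_R_block_freqs) auto
  finally show ?thesis .
qed

lemma square_energy_R_block_freqs_le:
  assumes k: "k \<ge> 1" and "\<epsilon> > 0" "C \<ge> 0"
    and C: "\<And>n. n > 0 \<Longrightarrow> real (divisor_count n) \<le> C * real n powr \<epsilon>"
  shows "real (square_energy (R_block_freqs A k)) \<le> real A * real A ^ k * (1 + C * (real A ^ (k + 1)) powr \<epsilon>)"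
proof -
  define K where "K = nat \<lfloor>sqrt (real A ^ (k + 1))\<rfloor>"
  have "real K \<le> sqrt (real A ^ (k + 1))"
  proof -
    have "real K = real_of_int \<lfloor>sqrt (real A ^ (k + 1))\<rfloor>" by (simp add: K_def)
    then show ?thesis by linarith
  qed
  then have K: "real K ^ 2 \<le> real A ^ (k + 1)"
    using power_mono[of "real K" _ 2] by fastforce
  have D: "real (divisor_count h) \<le> C * (real A ^ (k + 1)) powr \<epsilon>" if "0 < h" "h \<le> K\<^sup>2" for h
  proof -
    have "real h \<le> real A ^ (k + 1)" using that K by (metis of_nat_le_iff of_nat_power order_trans)
    then have "C * real h powr \<epsilon> \<le> C * (real A ^ (k + 1)) powr \<epsilon>"
      using \<open>\<epsilon> > 0\<close> \<open>C \<ge> 0\<close> by (intro mult_left_mono powr_mono2) auto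
    then show ?thesis using C[OF that(1)] by linarith
  qed
  have "R_block_freqs A k \<subseteq> {..K}" using R_block_freqs_subset[OF k, of A] by (auto simp: K_def)
  then have "real (square_energy (R_block_freqs A k)) \<le>
      real (card (R_block_freqs A k)) ^ 2 * (1 + C * (real A ^ (k + 1)) powr \<epsilon>)"
    using D \<open>C \<ge> 0\<close> by (intro square_energy_le finite_R_block_freqs) auto
  also have "\<dots> \<le> real A * real A ^ k * (1 + C * (real A ^ (k + 1)) powr \<epsilon>)"
    using card_R_block_freqs_le[OF k] power_mono[of _ "sqrt (real A ^ (k + 1))" 2] \<open>C \<ge> 0\<close>
    by (intro mult_right_mono) auto
  finally show ?thesis .
qed

lemma R_block_moment_four_le:
  assumes "\<epsilon> > 0"
  obtains K where "K > 0" "\<And>k. k \<ge> 1 \<Longrightarrow> R_block_moment s A k 4 \<le> K * (real A ^ k) powr (1 - 4 * s + \<epsilon>)"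
proof -
  obtain C where "C > 0" and C: "\<And>n. n > 0 \<Longrightarrow> real (divisor_count n) \<le> C * real n powr \<epsilon>"
    using divisor_count_le_powr[OF assms] by blast
  show ?thesis
  proof
    show "real A * (1 + C * real A powr \<epsilon>) > 0" using A \<open>C > 0\<close> by (simp add: add_pos_nonneg)
    fix k :: nat assume k: "k \<ge> 1"
    define X where "X = real A ^ k"
    have X: "X \<ge> 1" using A by (simp add: X_def one_le_power)
    have "1 + C * (real A * X) powr \<epsilon> \<le> (1 + C * real A powr \<epsilon>) * X powr \<epsilon>"
      using X \<open>C > 0\<close> \<open>\<epsilon> > 0\<close> ge_one_powr_ge_zero[of X \<epsilon>] by (simp add: powr_mult algebra_simps)
    then have "real A * X * (1 + C * (real A * X) powr \<epsilon>) \<le> real A * X * ((1 + C * real A powr \<epsilon>) * X powr \<epsilon>)"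
      using X by (intro mult_left_mono) auto
    then have "(X powr (-s)) ^ 4 * real (square_energy (R_block_freqs A k)) \<le>
        (X powr (-s)) ^ 4 * (real A * X * ((1 + C * real A powr \<epsilon>) * X powr \<epsilon>))"
      using square_energy_R_block_freqs_le[OF k assms _ C] \<open>C > 0\<close>
      by (intro mult_left_mono) (auto simp: X_def)
    also have "\<dots> = real A * (1 + C * real A powr \<epsilon>) * (X powr (-4 * s) * X powr 1 * X powr \<epsilon>)"
      using X powr_realpow[of "X powr (-s)" 4] by (simp add: powr_powr mult_ac)
    also have "\<dots> = real A * (1 + C * real A powr \<epsilon>) * X powr (1 - 4 * s + \<epsilon>)"
      using powr_add[of X "-4 * s + 1" \<epsilon>] powr_add[of X "-4 * s" 1] by (simp add: add.commute)
    finally show "R_block_moment s A k 4 \<le> real A * (1 + C * real A powr \<epsilon>) * (real A ^ k) powr (1 - 4 * s + \<epsilon>)"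
      using R_block_moment_four_le_energy[OF k] by (simp add: X_def)
  qed
qed

lemma norm_LP_block_R_fun_le:
  assumes k: "k \<ge> 1"
  shows "norm (LP_block A k (R_fun s) x) \<le> sqrt (real A) * (real A ^ k) powr (1/2 - s)"
proof -
  define X where "X = real A ^ k"
  have X: "X > 0" using A by (simp add: X_def)
  have "norm (LP_block A k (R_fun s) x) \<le> (\<Sum>m\<in>R_block_freqs A k. \<bar>real m powr (-2 * s)\<bar>)"
    unfolding LP_block_R_fun[OF s] by (rule norm_sq_trig_poly_le)
  also have "\<dots> \<le> (\<Sum>m\<in>R_block_freqs A k. X powr (-s))"
    using R_block_weight_bounds(2)[OF k] by (intro sum_mono) (simp add: X_def)
  also have "\<dots> = real (card (R_block_freqs A k)) * X powr (-s)" by simp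
  also have "\<dots> \<le> sqrt (real A * X) * X powr (-s)"
    using card_R_block_freqs_le[OF k] by (intro mult_right_mono) (auto simp: X_def)
  also have "\<dots> = sqrt (real A) * (X powr (1/2) * X powr (-s))"
    using X by (simp add: real_sqrt_mult powr_half_sqrt)
  also have "\<dots> = sqrt (real A) * X powr (1/2 - s)"
    by (simp flip: powr_add)
  finally show ?thesis by (simp add: X_def)
qed

lemma norm_LP_block_R_fun_ge_eventually:
  obtains c X0 where "c > 0"
    "\<And>k x. k \<ge> 1 \<Longrightarrow> X0 \<le> real A ^ k \<Longrightarrow> 0 \<le> x \<Longrightarrow> x \<le> 1 / (6 * real A ^ (k + 1)) \<Longrightarrow>
      c * (real A ^ k) powr (1/2 - s) \<le> norm (LP_block A k (R_fun s) x)"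
proof -
  obtain c X0 where c: "c > 0"
    and N: "\<And>k. k \<ge> 1 \<Longrightarrow> X0 \<le> real A ^ k \<Longrightarrow> c * (real A ^ k) powr (1/2) \<le> real (card (R_block_freqs A k))"
    using card_R_block_freqs_ge_eventually by blast
  show ?thesis
  proof
    show "c * real A powr (-s) / 2 > 0" using c A by simp
    fix k :: nat and x :: real
    assume k: "k \<ge> 1" and X0: "X0 \<le> real A ^ k" and x: "0 \<le> x" "x \<le> 1 / (6 * real A ^ (k + 1))"
    define X where "X = real A ^ k"
    have X: "X > 0" using A by (simp add: X_def)
    have "X powr (1/2 - s) = X powr (1/2) * X powr (-s)" by (simp flip: powr_add)
    then have "c * real A powr (-s) / 2 * X powr (1/2 - s) = c * X powr (1/2) * (real A * X) powr (-s) / 2"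
      using X by (simp add: powr_mult mult_ac)
    also have "\<dots> \<le> real (card (R_block_freqs A k)) * (real A * X) powr (-s) / 2"
      using N[OF k X0] by (intro divide_right_mono mult_right_mono) (auto simp: X_def)
    also have "\<dots> \<le> (\<Sum>m\<in>R_block_freqs A k. real m powr (-2 * s)) / 2"
      using sum_mono[OF R_block_weight_bounds(1)[OF k]] by (simp add: X_def)
    also have "\<dots> \<le> norm (LP_block A k (R_fun s) x)"
      unfolding LP_block_R_fun[OF s]
      using mem_R_block_freqs_iff[OF k] x A by (intro norm_sq_trig_poly_ge_near_zero) auto
    finally show "c * real A powr (-s) / 2 * (real A ^ k) powr (1/2 - s) \<le> norm (LP_block A k (R_fun s) x)"
      by (simp add: X_def)
  qed
qed

section \<open>Besov regularity of R_s\<close>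

lemma R_block_moment_nonneg: "q > 0 \<Longrightarrow> 0 \<le> R_block_moment s A k q"
  unfolding R_block_moment_def
  by (intro integral_nonneg integrable_powr[OF continuous_on_norm_LP_block_R_fun[OF s]]) auto

lemmas R_block_moment_le_truncated =
  integral_powr_le_truncated[OF continuous_on_norm_LP_block_R_fun[OF s] norm_ge_zero, folded R_block_moment_def]

lemmas R_block_moment_le_bound_powr_mult =
  integral_powr_le_bound_powr_mult[OF continuous_on_norm_LP_block_R_fun[OF s] norm_ge_zero, folded R_block_moment_def]

lemmas R_block_moment_ge_power_of_lower =
  integral_powr_ge_power_of_lower[OF continuous_on_norm_LP_block_R_fun[OF s] norm_ge_zero, folded R_block_moment_def]

lemmas R_block_moment_ge_interpolated =
  integral_powr_ge_interpolated[OF continuous_on_norm_LP_block_R_fun[OF s] norm_ge_zero, folded R_block_moment_def]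

lemmas R_block_moment_ge_initial_segment =
  integral_powr_ge_initial_segment[OF continuous_on_norm_LP_block_R_fun[OF s] norm_ge_zero, folded R_block_moment_def]

lemma besov_inf_R_fun_if_le_four:
  assumes p: "0 < p" "p \<le> 4" and \<sigma>: "\<sigma> < p * (s - 1/4)"
  shows "besov_inf A (\<sigma> / p) p (R_fun s)"
proof -
  define \<epsilon> where "\<epsilon> = 4 * (s - 1/4) - 4 * \<sigma> / p"
  have "\<epsilon> > 0" using \<sigma> p by (simp add: \<epsilon>_def field_simps)
  then obtain K where "K > 0" and J4: "\<And>k. k \<ge> 1 \<Longrightarrow> R_block_moment s A k 4 \<le> K * (real A ^ k) powr (1 - 4 * s + \<epsilon>)"
    using R_block_moment_four_le by blast
  have "R_block_moment s A k p \<le> 2 * K powr (p / 4) * (real A ^ k) powr (-\<sigma>)" if k: "k \<ge> 1" for k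
  proof -
    define X where "X = real A ^ k"
    have X: "X > 0" using A by (simp add: X_def)
    define l where "l = (K * X powr (-4 * \<sigma> / p)) powr (1 / 4)"
    have "l > 0" using \<open>K > 0\<close> X by (simp add: l_def)
    have l4: "l powr 4 = K * X powr (1 - 4 * s + \<epsilon>)"
      using \<open>K > 0\<close> X p by (simp add: l_def powr_powr \<epsilon>_def)
    have lp: "l powr p = K powr (p / 4) * X powr (-\<sigma>)"
      using \<open>K > 0\<close> X p by (simp add: l_def powr_powr powr_mult)
    have "R_block_moment s A k p \<le> l powr p + l powr (p - 4) * R_block_moment s A k 4"
      using p \<open>l > 0\<close> by (rule R_block_moment_le_truncated)
    also have "\<dots> \<le> l powr p + l powr (p - 4) * l powr 4"
      using J4[OF k] l4 by (intro add_left_mono mult_left_mono) (auto simp: X_def)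
    also have "\<dots> = 2 * l powr p" by (simp flip: powr_add)
    finally show ?thesis by (simp add: lp X_def)
  qed
  then show ?thesis
    using A \<open>K > 0\<close> p
    by (subst besov_inf_R_fun_iff[OF s p(1)])
      (auto intro!: bdd_above_scaled_root_if_le[where K = "2 * K powr (p / 4)" and e = "-\<sigma>"] R_block_moment_nonneg)
qed

lemma besov_inf_R_fun_if_gt_four:
  assumes p: "4 < p" and \<sigma>: "\<sigma> < 1 + p * (s - 1/2)"
  shows "besov_inf A (\<sigma> / p) p (R_fun s)"
proof -
  define \<epsilon> where "\<epsilon> = 1 + p * (s - 1/2) - \<sigma>"
  have "\<epsilon> > 0" using \<sigma> by (simp add: \<epsilon>_def)
  then obtain K where "K > 0" and J4: "\<And>k. k \<ge> 1 \<Longrightarrow> R_block_moment s A k 4 \<le> K * (real A ^ k) powr (1 - 4 * s + \<epsilon>)"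
    using R_block_moment_four_le by blast
  have "R_block_moment s A k p \<le> sqrt (real A) powr (p - 4) * K * (real A ^ k) powr (-\<sigma>)" if k: "k \<ge> 1" for k
  proof -
    define X where "X = real A ^ k"
    have X: "X > 0" using A by (simp add: X_def)
    define B where "B = sqrt (real A) * X powr (1/2 - s)"
    have "R_block_moment s A k p \<le> B powr (p - 4) * R_block_moment s A k 4"
      using p norm_LP_block_R_fun_le[OF k] by (intro R_block_moment_le_bound_powr_mult) (auto simp: B_def X_def)
    also have "\<dots> \<le> B powr (p - 4) * (K * X powr (1 - 4 * s + \<epsilon>))"
      using J4[OF k] by (intro mult_left_mono) (auto simp: X_def)
    also have "\<dots> = sqrt (real A) powr (p - 4) * K * (X powr ((1/2 - s) * (p - 4)) * X powr (1 - 4 * s + \<epsilon>))"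
      using X by (simp add: B_def powr_mult powr_powr mult_ac)
    also have "X powr ((1/2 - s) * (p - 4)) * X powr (1 - 4 * s + \<epsilon>) = X powr (-\<sigma>)"
      by (simp add: \<epsilon>_def algebra_simps flip: powr_add)
    finally show ?thesis by (simp add: X_def)
  qed
  then show ?thesis
    using A \<open>K > 0\<close> p
    by (subst besov_inf_R_fun_iff[OF s])
      (auto intro!: bdd_above_scaled_root_if_le[where K = "sqrt (real A) powr (p - 4) * K" and e = "-\<sigma>"]
        R_block_moment_nonneg)
qed

lemma not_besov_inf_R_fun_if_ge_two:
  assumes p: "2 \<le> p" and \<sigma>: "\<sigma> > p * (s - 1/4)"
  shows "\<not> besov_inf A (\<sigma> / p) p (R_fun s)"
proof -
  obtain c X0 where "c > 0"
    and J2: "\<And>k. k \<ge> 1 \<Longrightarrow> X0 \<le> real A ^ k \<Longrightarrow> c * (real A ^ k) powr (1/2 - 2 * s) \<le> R_block_moment s A k 2"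
    using R_block_moment_two_ge_eventually by blast
  have "(c / 2) powr (p / 2) * (real A ^ k) powr ((1/2 - 2 * s) * (p / 2)) \<le> R_block_moment s A k p"
    if k: "k \<ge> 1" and X0: "X0 \<le> real A ^ k" for k
  proof -
    have "(c / 2) powr (p / 2) * (real A ^ k) powr ((1/2 - 2 * s) * (p / 2)) =
        (c / 2 * (real A ^ k) powr (1/2 - 2 * s)) powr (p / 2)"
      using \<open>c > 0\<close> A by (simp add: powr_mult powr_powr powr_divide)
    also have "\<dots> \<le> (R_block_moment s A k 2 / 2) powr (p / 2)"
      using J2[OF k X0] \<open>c > 0\<close> p by (intro powr_mono2) auto
    also have "\<dots> \<le> R_block_moment s A k p"
      using p R_block_moment_ge_power_of_lower[of 2 p A k] by simp
    finally show ?thesis .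
  qed
  moreover have "\<sigma> + (1/2 - 2 * s) * (p / 2) > 0" using \<sigma> by (simp add: algebra_simps)
  ultimately have "\<not> bdd_above (range (\<lambda>k. (real A ^ k) powr (\<sigma> / p) * R_block_moment s A k p powr (1 / p)))"
    using A \<open>c > 0\<close> p by (intro not_bdd_above_scaled_root_if_ge[where Y = X0 and K = "(c / 2) powr (p / 2)"]) auto
  then show ?thesis using A p by (subst besov_inf_R_fun_iff[OF s]) auto
qed

lemma not_besov_inf_R_fun_if_lt_two:
  assumes p: "0 < p" "p < 2" and \<sigma>: "\<sigma> > p * (s - 1/4)"
  shows "\<not> besov_inf A (\<sigma> / p) p (R_fun s)"
proof -
  define \<delta> where "\<delta> = \<sigma> - p * (s - 1/4)"
  define \<epsilon> where "\<epsilon> = \<delta> / (2 - p)"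
  have "\<delta> > 0" "\<epsilon> > 0" using \<sigma> p by (simp_all add: \<delta>_def \<epsilon>_def)
  obtain K where "K > 0" and J4: "\<And>k. k \<ge> 1 \<Longrightarrow> R_block_moment s A k 4 \<le> K * (real A ^ k) powr (1 - 4 * s + \<epsilon>)"
    using R_block_moment_four_le[OF \<open>\<epsilon> > 0\<close>] by blast
  obtain c X0 where "c > 0"
    and J2: "\<And>k. k \<ge> 1 \<Longrightarrow> X0 \<le> real A ^ k \<Longrightarrow> c * (real A ^ k) powr (1/2 - 2 * s) \<le> R_block_moment s A k 2"
    using R_block_moment_two_ge_eventually by blast
  define g where "g = 1/2 - 2 * s + \<epsilon>"
  define a where "a = 2 * K / c"
  have "a > 0" using \<open>K > 0\<close> \<open>c > 0\<close> by (simp add: a_def)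
  have "a powr ((p - 2) / 2) * (c / 2) * (real A ^ k) powr (g * (p - 2) / 2 + (1/2 - 2 * s)) \<le> R_block_moment s A k p"
    if k: "k \<ge> 1" and X0: "X0 \<le> real A ^ k" for k
  proof -
    define X where "X = real A ^ k"
    have X: "X > 0" using A by (simp add: X_def)
    \<comment> \<open>Chosen so that the L^4 term of the interpolation inequality is at most half the L^2 term.\<close>
    define l where "l = (a * X powr g) powr (1/2)"
    have "l > 0" using \<open>a > 0\<close> X by (simp add: l_def)
    have l_powr: "l powr t = a powr (t / 2) * X powr (g * t / 2)" for t
      using \<open>a > 0\<close> X by (simp add: l_def powr_mult powr_powr)
    have "l powr (2 - 4) * R_block_moment s A k 4 \<le> l powr (-2) * (K * X powr (1 - 4 * s + \<epsilon>))"
      using J4[OF k] by (auto simp: X_def intro!: mult_left_mono)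
    also have "\<dots> = (K / a) * (X powr (- g) * X powr (1 - 4 * s + \<epsilon>))"
      using \<open>a > 0\<close> by (simp add: l_powr powr_minus field_simps)
    also have "\<dots> = c / 2 * X powr (1/2 - 2 * s)"
      using \<open>K > 0\<close> \<open>c > 0\<close> by (simp add: a_def g_def flip: powr_add)
    also have "\<dots> \<le> R_block_moment s A k 2 / 2"
      using J2[OF k X0] by (simp add: X_def)
    finally have interpolated: "l powr (p - 2) * (R_block_moment s A k 2 / 2) \<le> R_block_moment s A k p"
      using p \<open>l > 0\<close> by (intro R_block_moment_ge_interpolated[where r = 4]) auto
    have "a powr ((p - 2) / 2) * (c / 2) * X powr (g * (p - 2) / 2 + (1/2 - 2 * s)) =
        l powr (p - 2) * (c / 2 * X powr (1/2 - 2 * s))"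
      by (simp add: l_powr powr_add mult_ac)
    also have "\<dots> \<le> l powr (p - 2) * (R_block_moment s A k 2 / 2)"
      using J2[OF k X0] by (intro mult_left_mono) (auto simp: X_def)
    finally show ?thesis using interpolated by (simp add: X_def)
  qed
  moreover have "\<sigma> + (g * (p - 2) / 2 + (1/2 - 2 * s)) = \<delta> / 2"
    using p by (simp add: g_def \<epsilon>_def \<delta>_def field_simps)
  ultimately have "\<not> bdd_above (range (\<lambda>k. (real A ^ k) powr (\<sigma> / p) * R_block_moment s A k p powr (1 / p)))"
    using A \<open>a > 0\<close> \<open>c > 0\<close> \<open>\<delta> > 0\<close> p
    by (intro not_bdd_above_scaled_root_if_ge[where Y = X0 and K = "a powr ((p - 2) / 2) * (c / 2)"]) auto
  then show ?thesis using A p by (subst besov_inf_R_fun_iff[OF s]) auto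
qed

lemma not_besov_inf_R_fun_if_peak:
  assumes p: "0 < p" and \<sigma>: "\<sigma> > 1 + p * (s - 1/2)"
  shows "\<not> besov_inf A (\<sigma> / p) p (R_fun s)"
proof -
  obtain c X0 where "c > 0"
    and peak: "\<And>k x. k \<ge> 1 \<Longrightarrow> X0 \<le> real A ^ k \<Longrightarrow> 0 \<le> x \<Longrightarrow> x \<le> 1 / (6 * real A ^ (k + 1)) \<Longrightarrow>
      c * (real A ^ k) powr (1/2 - s) \<le> norm (LP_block A k (R_fun s) x)"
    using norm_LP_block_R_fun_ge_eventually by blast
  have "c powr p / (6 * real A) * (real A ^ k) powr ((1/2 - s) * p - 1) \<le> R_block_moment s A k p"
    if k: "k \<ge> 1" and X0: "X0 \<le> real A ^ k" for k
  proof -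
    define X where "X = real A ^ k"
    have X: "X \<ge> 1" using A by (simp add: X_def one_le_power)
    have "1 \<le> 6 * real A * X" using mult_mono[of 1 "6 * real A" 1 X] A X by simp
    moreover have "real A ^ (k + 1) = real A * X" by (simp add: X_def)
    ultimately have "1 / (6 * real A * X) * (c * X powr (1/2 - s)) powr p \<le> R_block_moment s A k p"
      using p \<open>c > 0\<close> peak[OF k X0]
      by (intro R_block_moment_ge_initial_segment) (auto simp: X_def mult_ac)
    moreover have "1 / (6 * real A * X) * (c * X powr (1/2 - s)) powr p =
        c powr p / (6 * real A) * X powr ((1/2 - s) * p - 1)"
    proof -
      have "(c * X powr (1/2 - s)) powr p = c powr p * X powr ((1/2 - s) * p)"
        using \<open>c > 0\<close> X by (simp add: powr_mult powr_powr)
      moreover have "X powr ((1/2 - s) * p - 1) = X powr ((1/2 - s) * p) / X"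
        using X by (simp add: powr_diff)
      ultimately show ?thesis by simp
    qed
    ultimately show ?thesis by (simp add: X_def)
  qed
  moreover have "\<sigma> + ((1/2 - s) * p - 1) > 0" using \<sigma> by (simp add: algebra_simps)
  ultimately have "\<not> bdd_above (range (\<lambda>k. (real A ^ k) powr (\<sigma> / p) * R_block_moment s A k p powr (1 / p)))"
    using A \<open>c > 0\<close> p
    by (intro not_bdd_above_scaled_root_if_ge[where Y = X0 and K = "c powr p / (6 * real A)"]) auto
  then show ?thesis using A p by (subst besov_inf_R_fun_iff[OF s]) auto
qed

end

lemma SUP_ereal_eq_threshold:
  fixes S :: "real set"
  assumes below: "\<And>\<sigma>. \<sigma> < c \<Longrightarrow> \<sigma> \<in> S" and above: "\<And>\<sigma>. \<sigma> > c \<Longrightarrow> \<sigma> \<notin> S"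
  shows "(SUP \<sigma>\<in>S. ereal \<sigma>) = ereal c"
proof (rule antisym)
  show "(SUP \<sigma>\<in>S. ereal \<sigma>) \<le> ereal c"
    using above by (intro SUP_least) (auto simp: not_less[symmetric])
  show "ereal c \<le> (SUP \<sigma>\<in>S. ereal \<sigma>)"
    unfolding le_SUP_iff
  proof (intro allI impI)
    fix y :: ereal assume "y < ereal c"
    then show "\<exists>\<sigma>\<in>S. y < ereal \<sigma>"
    proof (cases y)
      case (real r)
      then show ?thesis using \<open>y < ereal c\<close> by (intro bexI[of _ "(r + c) / 2"] below) auto
    next
      case MInf
      then show ?thesis by (intro bexI[of _ "c - 1"] below) auto
    qed simp
  qed
qed

theorem propositionE:
  fixes s p :: real and A :: nat
  assumes "s > 1/2" and "p > 0" and "A \<ge> 2"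
  shows "(SUP \<sigma>\<in>{\<sigma>::real. besov_inf A (\<sigma> / p) p (R_fun s)}. ereal \<sigma>) =
           ereal (if p \<le> 4 then p * (s - 1/4) else 1 + p * (s - 1/2))"
proof (rule SUP_ereal_eq_threshold)
  fix \<sigma> :: real
  assume "\<sigma> < (if p \<le> 4 then p * (s - 1/4) else 1 + p * (s - 1/2))"
  then show "\<sigma> \<in> {\<sigma>. besov_inf A (\<sigma> / p) p (R_fun s)}"
    using besov_inf_R_fun_if_le_four[OF assms(1,3,2)] besov_inf_R_fun_if_gt_four[OF assms(1,3)]
    by (auto split: if_splits)
next
  fix \<sigma> :: real
  assume "\<sigma> > (if p \<le> 4 then p * (s - 1/4) else 1 + p * (s - 1/2))"
  then show "\<sigma> \<notin> {\<sigma>. besov_inf A (\<sigma> / p) p (R_fun s)}"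
    using not_besov_inf_R_fun_if_lt_two[OF assms(1,3,2)] not_besov_inf_R_fun_if_ge_two[OF assms(1,3)]
      not_besov_inf_R_fun_if_peak[OF assms(1,3,2)]
    by (cases "p < 2") (auto split: if_splits)
qed

end
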